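(* Let $F\in\mathcal K$. Then there exists a sequence of bounded measurable functions $h_k:\Omega_\ell\to\mathbb R$ such that $\mathbb E\big[|h_k(S_z\eta)-h_k(\eta)-F(\eta,z)|\big]\to0$ as $k\to\infty$, for all $z_{1,\ell}\in\mathcal R^\ell$ and $z\in\mathcal R$, where $\eta=(\omega,z_{1,\ell})$ and the expectation is over $\omega$.
   Context: Fix $d$, a finite $\mathcal R\subset\mathbb Z^d$ generating $\mathbb Z^d$ as an additive group, and $(\Omega,\mathfrak S,\mathbb P)$ with measurable commuting bijections $T_x$ ($x\in\mathbb Z^d$), $T_{x+y}=T_xT_y$, $T_0=\mathrm{id}$, $\mathbb P$ invariant and ergodic; $\mathbb E$ expectation. Fix $\ell\ge0$; $\Omega_\ell=\Omega\times\mathcal R^\ell$, $\eta=(\omega,z_{1,\ell})$, $z_{i,j}=(z_i,\dots,z_j)$; $S_z(\omega,z_{1,\ell})=(T_{z_1}\omega,(z_{2,\ell},z))$ ($S_z\omega=T_z\omega$ if $\ell=0$). Class $\mathcal K$: measurable $F:\Omega_\ell\times\mathcal R\to\mathbb R$ with (i) $F(\cdot,z_{1,\ell},z)\in L^1(\mathbb P)$ for all $z_{1,\ell},z$; (ii) for all $n\ge\ell$ and $a_{1,n}\in\mathcal R^n$, with $\eta_0=(\omega,a_{n-\ell+1,n})$, $\eta_i=S_{a_i}\eta_{i-1}$: $\mathbb E\sum_{i=0}^{n-1}F(\eta_i,a_{i+1})=0$; (iii) for a.e. $\omega$ and any two step sequences $a_{1,n},\bar a_{1,m}$ from $\eta_0=\bar\eta_0=(\omega,z_{1,\ell})$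 with $\eta_n=\bar\eta_m$: $\sum_{i<n}F(\eta_i,a_{i+1})=\sum_{j<m}F(\bar\eta_j,\bar a_{j+1})$. *)

theory Defs
  imports "HOL-Probability.Probability"
begin

inductive_set zgen :: "('b::ab_group_add) set \<Rightarrow> 'b set" for R where
  zgen_zero: "0 \<in> zgen R"
| zgen_add: "x \<in> zgen R \<Longrightarrow> r \<in> R \<Longrightarrow> x + r \<in> zgen R"
| zgen_diff: "x \<in> zgen R \<Longrightarrow> r \<in> R \<Longrightarrow> x - r \<in> zgen R"

definition Sshift :: "('b \<Rightarrow> 'a \<Rightarrow> 'a) \<Rightarrow> 'b \<Rightarrow> 'a \<times> 'b list \<Rightarrow> 'a \<times> 'b list" where
  "Sshift T z \<eta> = (case snd \<eta> of
      [] \<Rightarrow> (T z (fst \<eta>), [])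
    | (z1 # zs) \<Rightarrow> (T z1 (fst \<eta>), zs @ [z]))"

definition traj :: "('b \<Rightarrow> 'a \<Rightarrow> 'a) \<Rightarrow> 'a \<times> 'b list \<Rightarrow> 'b list \<Rightarrow> nat \<Rightarrow> 'a \<times> 'b list" where
  "traj T \<eta>0 as i = fold (Sshift T) (take i as) \<eta>0"

definition pathsum :: "('b \<Rightarrow> 'a \<Rightarrow> 'a) \<Rightarrow> ('a \<Rightarrow> 'b list \<Rightarrow> 'b \<Rightarrow> real)
    \<Rightarrow> 'a \<times> 'b list \<Rightarrow> 'b list \<Rightarrow> real" where
  "pathsum T F \<eta>0 as = (\<Sum>i<length as. F (fst (traj T \<eta>0 as i)) (snd (traj T \<eta>0 as i)) (as ! i))"

definition ergodic_action :: "'a measure \<Rightarrow> (int^'d \<Rightarrow> 'a \<Rightarrow> 'a) \<Rightarrow> bool" where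
  "ergodic_action M T \<longleftrightarrow>
     prob_space M
   \<and> (\<forall>x. T x \<in> measurable M M \<and> bij_betw (T x) (space M) (space M))
   \<and> (\<forall>x y. \<forall>\<omega>\<in>space M. T (x + y) \<omega> = T x (T y \<omega>))
   \<and> (\<forall>\<omega>\<in>space M. T 0 \<omega> = \<omega>)
   \<and> (\<forall>x. distr M M (T x) = M)
   \<and> (\<forall>A\<in>sets M. (\<forall>x. T x -` A \<inter> space M = A) \<longrightarrow> measure M A = 0 \<or> measure M A = 1)"

definition classK :: "'a measure \<Rightarrow> (int^'d \<Rightarrow> 'a \<Rightarrow> 'a) \<Rightarrow> (int^'d) set \<Rightarrow> nat
    \<Rightarrow> ('a \<Rightarrow> (int^'d) list \<Rightarrow> int^'d \<Rightarrow> real) \<Rightarrow> bool" where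
  "classK M T R l F \<longleftrightarrow>
     (\<forall>zs z. set zs \<subseteq> R \<longrightarrow> length zs = l \<longrightarrow> z \<in> R \<longrightarrow>
         (\<lambda>\<omega>. F \<omega> zs z) \<in> borel_measurable M \<and> integrable M (\<lambda>\<omega>. F \<omega> zs z))
   \<and> (\<forall>as. set as \<subseteq> R \<longrightarrow> l \<le> length as \<longrightarrow>
         (\<integral>\<omega>. pathsum T F (\<omega>, drop (length as - l) as) as \<partial>M) = 0)
   \<and> (AE \<omega> in M. \<forall>zs as bs. set zs \<subseteq> R \<longrightarrow> length zs = l \<longrightarrow> set as \<subseteq> R \<longrightarrow> set bs \<subseteq> R \<longrightarrow>
         traj T (\<omega>, zs) as (length as) = traj T (\<omega>, zs) bs (length bs) \<longrightarrow>
         pathsum T F (\<omega>, zs) as = pathsum T F (\<omega>, zs) bs)"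

end

theory Submission
  imports Defs
begin

text \<open>
  Path sums of \<open>F\<close> depend only on the endpoints. Fix a constant history \<open>c = (r,\<dots>,r) \<in> \<R>\<^sup>\<ell>\<close>.
  For a step list \<open>w\<close>, moving \<open>\<eta>\<close> to \<open>S\<^sub>z \<eta>\<close> changes the path sum along \<open>w c c\<close> by
  \<open>G\<^sub>z(T\<^bsub>\<Sigma>w + \<Sigma>z\<^sub>1\<^sub>,\<^sub>\<ell>\<^esub> \<omega>) - F(\<eta>, z)\<close>, where \<open>G\<^sub>z\<close> is the difference of the path sums
  from \<open>(\<omega>, c)\<close> along \<open>z c\<close> and along \<open>c\<close>, a mean-zero function. Minus a convex combination
  of such path sums is therefore a potential whose increments differ from \<open>F\<close> by an ergodic
  average of the \<open>G\<^sub>z\<close>. Such averages can be made small in \<open>L\<^sup>1\<close>: the convex combination of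
  translates of a bounded mean-zero \<open>g\<close> with least \<open>L\<^sup>2\<close>-norm is approximated by an
  \<open>L\<^sup>2\<close>-convergent minimising sequence whose limit is invariant, hence zero by ergodicity.
  Truncating the potential finally makes it bounded.
\<close>

lemma abs_le_sq_div_add: "0 < (t::real) \<Longrightarrow> \<bar>x\<bar> \<le> x\<^sup>2 / t + t / 4"
proof -
  assume t: "0 < t"
  have "0 \<le> (\<bar>x\<bar> - t / 2)\<^sup>2" by simp
  then have "t * \<bar>x\<bar> \<le> x\<^sup>2 + t\<^sup>2 / 4" by (simp add: power2_eq_square algebra_simps abs_mult_self_eq)
  with t show ?thesis by (simp add: field_simps power2_eq_square)
qed

lemma abs_power2_le: "\<bar>x\<bar> \<le> (b::real) \<Longrightarrow> \<bar>x\<^sup>2\<bar> \<le> b\<^sup>2"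
  using power_mono[of "\<bar>x\<bar>" b 2] by simp

lemma power2_diff_le_three_steps: "((a::real) - d)\<^sup>2 \<le> 3 * ((a - b)\<^sup>2 + (c - b)\<^sup>2 + (c - d)\<^sup>2)"
proof -
  have "0 \<le> ((a - b) - (b - c))\<^sup>2 + ((b - c) - (c - d))\<^sup>2 + ((a - b) - (c - d))\<^sup>2" by simp
  then show ?thesis by (simp add: power2_eq_square algebra_simps)
qed

lemma tendsto_integral_abs_truncation:
  fixes f :: "'a \<Rightarrow> real"
  assumes "integrable M f"
  shows "(\<lambda>K::nat. \<integral>\<omega>. \<bar>max (- real K) (min (real K) (f \<omega>)) - f \<omega>\<bar> \<partial>M) \<longlonglongrightarrow> 0"
proof -
  have "(\<lambda>K::nat. \<integral>\<omega>. \<bar>max (- real K) (min (real K) (f \<omega>)) - f \<omega>\<bar> \<partial>M) \<longlonglongrightarrow> (\<integral>\<omega>. 0 \<partial>M)"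
  proof (rule integral_dominated_convergence[where w="\<lambda>\<omega>. \<bar>f \<omega>\<bar>"])
    show "AE \<omega> in M. (\<lambda>K. \<bar>max (- real K) (min (real K) (f \<omega>)) - f \<omega>\<bar>) \<longlonglongrightarrow> 0"
    proof (rule AE_I2, rule tendsto_eventually)
      fix \<omega>
      show "\<forall>\<^sub>F K in sequentially. \<bar>max (- real K) (min (real K) (f \<omega>)) - f \<omega>\<bar> = 0"
        unfolding eventually_sequentially
        by (rule exI[of _ "nat \<lceil>\<bar>f \<omega>\<bar>\<rceil>"]) linarith
    qed
  qed (use assms in auto)
  then show ?thesis by simp
qed

lemma finite_uniform_truncation:
  fixes f :: "'i \<Rightarrow> 'a \<Rightarrow> real"
  assumes "finite I" "\<And>i. i \<in> I \<Longrightarrow> integrable M (f i)" "0 < e"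
  obtains K :: nat where "\<And>i. i \<in> I \<Longrightarrow> (\<integral>\<omega>. \<bar>max (- real K) (min (real K) (f i \<omega>)) - f i \<omega>\<bar> \<partial>M) < e"
proof -
  have "\<forall>\<^sub>F K in sequentially. (\<integral>\<omega>. \<bar>max (- real K) (min (real K) (f i \<omega>)) - f i \<omega>\<bar> \<partial>M) < e"
    if "i \<in> I" for i
    using order_tendstoD(2)[OF tendsto_integral_abs_truncation[OF assms(2)[OF that]] assms(3)] .
  then have "\<forall>\<^sub>F K in sequentially. \<forall>i\<in>I. (\<integral>\<omega>. \<bar>max (- real K) (min (real K) (f i \<omega>)) - f i \<omega>\<bar> \<partial>M) < e"
    by (simp add: eventually_ball_finite_distrib[OF assms(1)])
  then obtain N where "\<forall>K\<ge>N. \<forall>i\<in>I. (\<integral>\<omega>. \<bar>max (- real K) (min (real K) (f i \<omega>)) - f i \<omega>\<bar> \<partial>M) < e"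
    unfolding eventually_sequentially by blast
  then show ?thesis using that by blast
qed

context prob_space
begin

lemma integrable_sq_bounded:
  fixes f :: "'a \<Rightarrow> real"
  assumes "f \<in> borel_measurable M" "AE \<omega> in M. \<bar>f \<omega>\<bar> \<le> B"
  shows "integrable M (\<lambda>\<omega>. (f \<omega>)\<^sup>2)"
proof (rule integrable_const_bound[where B="B\<^sup>2"])
  show "AE \<omega> in M. norm ((f \<omega>)\<^sup>2) \<le> B\<^sup>2"
    using assms(2) by eventually_elim (metis abs_power2_le real_norm_def)
qed (use assms(1) in measurable)

lemma integrable_sq_diff_bounded:
  fixes f g :: "'a \<Rightarrow> real"
  assumes "f \<in> borel_measurable M" "g \<in> borel_measurable M"
    and "AE \<omega> in M. \<bar>f \<omega>\<bar> \<le> B" "AE \<omega> in M. \<bar>g \<omega>\<bar> \<le> B"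
  shows "integrable M (\<lambda>\<omega>. (f \<omega> - g \<omega>)\<^sup>2)"
proof -
  have "AE \<omega> in M. \<bar>f \<omega> - g \<omega>\<bar> \<le> 2 * B" using assms(3,4) by eventually_elim auto
  then show ?thesis by (rule integrable_sq_bounded[OF borel_measurable_diff[OF assms(1,2)]])
qed

lemma integral_sq_diff_parallelogram:
  fixes f g :: "'a \<Rightarrow> real"
  assumes "f \<in> borel_measurable M" "g \<in> borel_measurable M"
    and "AE \<omega> in M. \<bar>f \<omega>\<bar> \<le> B" "AE \<omega> in M. \<bar>g \<omega>\<bar> \<le> B"
  shows "(\<integral>\<omega>. (f \<omega> - g \<omega>)\<^sup>2 \<partial>M) = 2 * (\<integral>\<omega>. (f \<omega>)\<^sup>2 \<partial>M) + 2 * (\<integral>\<omega>. (g \<omega>)\<^sup>2 \<partial>M)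
      - 4 * (\<integral>\<omega>. ((f \<omega> + g \<omega>) / 2)\<^sup>2 \<partial>M)"
proof -
  have "AE \<omega> in M. \<bar>(f \<omega> + g \<omega>) / 2\<bar> \<le> B" using assms(3,4) by eventually_elim auto
  then have "integrable M (\<lambda>\<omega>. ((f \<omega> + g \<omega>) / 2)\<^sup>2)"
    by (rule integrable_sq_bounded[rotated]) (use assms in measurable)
  moreover have "(\<lambda>\<omega>. (f \<omega> - g \<omega>)\<^sup>2) = (\<lambda>\<omega>. 2 * (f \<omega>)\<^sup>2 + 2 * (g \<omega>)\<^sup>2 - 4 * ((f \<omega> + g \<omega>) / 2)\<^sup>2)"
    by (auto simp: power2_eq_square field_simps)
  ultimately show ?thesis
    using integrable_sq_bounded[OF assms(1,3)] integrable_sq_bounded[OF assms(2,4)] by simp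
qed

lemma integral_abs_le_integral_sq:
  fixes f :: "'a \<Rightarrow> real"
  assumes "f \<in> borel_measurable M" "AE \<omega> in M. \<bar>f \<omega>\<bar> \<le> B" "0 < t"
  shows "(\<integral>\<omega>. \<bar>f \<omega>\<bar> \<partial>M) \<le> (\<integral>\<omega>. (f \<omega>)\<^sup>2 \<partial>M) / t + t / 4"
proof -
  have sq: "integrable M (\<lambda>\<omega>. (f \<omega>)\<^sup>2)" by (rule integrable_sq_bounded[OF assms(1,2)])
  have "(\<integral>\<omega>. \<bar>f \<omega>\<bar> \<partial>M) \<le> (\<integral>\<omega>. (f \<omega>)\<^sup>2 / t + t / 4 \<partial>M)"
    by (rule integral_mono_AE') (use sq assms(3) abs_le_sq_div_add in auto)
  also have "\<dots> = (\<integral>\<omega>. (f \<omega>)\<^sup>2 \<partial>M) / t + t / 4"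
    using sq by (simp add: prob_space)
  finally show ?thesis .
qed

lemma tendsto_integral_bounded:
  fixes fs :: "nat \<Rightarrow> 'a \<Rightarrow> real"
  assumes "\<And>n. fs n \<in> borel_measurable M" "f \<in> borel_measurable M"
    and "\<And>n. AE \<omega> in M. \<bar>fs n \<omega>\<bar> \<le> B" "AE \<omega> in M. (\<lambda>n. fs n \<omega>) \<longlonglongrightarrow> f \<omega>"
  shows "(\<lambda>n. integral\<^sup>L M (fs n)) \<longlonglongrightarrow> integral\<^sup>L M f"
  by (rule integral_dominated_convergence[where w="\<lambda>_. B"]) (use assms in auto)

lemma bounded_mean_zero_L1_approx:
  fixes g :: "'a \<Rightarrow> real"
  assumes g: "integrable M g" "integral\<^sup>L M g = 0" and e: "0 < e"
  obtains g' B where "g' \<in> borel_measurable M" "\<forall>\<omega>\<in>space M. \<bar>g' \<omega>\<bar> \<le> B" "integral\<^sup>L M g' = 0"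
    "(\<integral>\<omega>. \<bar>g \<omega> - g' \<omega>\<bar> \<partial>M) < e"
proof -
  have [measurable]: "g \<in> borel_measurable M" using g(1) by auto
  obtain K :: nat where K: "(\<integral>\<omega>. \<bar>max (- real K) (min (real K) (g \<omega>)) - g \<omega>\<bar> \<partial>M) < e / 2"
    using order_tendstoD(2)[OF tendsto_integral_abs_truncation[OF g(1)], of "e / 2"] e
    by (auto simp: eventually_sequentially)
  define c where "c = (\<integral>\<omega>. max (- real K) (min (real K) (g \<omega>)) \<partial>M)"
  have trunc_integrable: "integrable M (\<lambda>\<omega>. max (- real K) (min (real K) (g \<omega>)))"
    by (intro integrable_const_bound[where B="real K"]) auto
  have "\<bar>c\<bar> = \<bar>\<integral>\<omega>. max (- real K) (min (real K) (g \<omega>)) - g \<omega> \<partial>M\<bar>"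
    using trunc_integrable g by (simp add: c_def)
  also have "\<dots> \<le> (\<integral>\<omega>. \<bar>max (- real K) (min (real K) (g \<omega>)) - g \<omega>\<bar> \<partial>M)"
    by (rule integral_abs_bound)
  finally have c_small: "\<bar>c\<bar> < e / 2" using K by linarith
  show ?thesis
  proof (rule that[of "\<lambda>\<omega>. max (- real K) (min (real K) (g \<omega>)) - c" "real K + \<bar>c\<bar>"])
    show "integral\<^sup>L M (\<lambda>\<omega>. max (- real K) (min (real K) (g \<omega>)) - c) = 0"
      using trunc_integrable by (simp add: c_def prob_space)
    have "(\<integral>\<omega>. \<bar>g \<omega> - (max (- real K) (min (real K) (g \<omega>)) - c)\<bar> \<partial>M)
        \<le> (\<integral>\<omega>. \<bar>max (- real K) (min (real K) (g \<omega>)) - g \<omega>\<bar> + \<bar>c\<bar> \<partial>M)"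
      using g(1) trunc_integrable by (intro integral_mono) auto
    also have "\<dots> < e"
      using K c_small g(1) trunc_integrable by (simp add: prob_space)
    finally show "(\<integral>\<omega>. \<bar>g \<omega> - (max (- real K) (min (real K) (g \<omega>)) - c)\<bar> \<partial>M) < e" .
  qed auto
qed

lemma L2_Cauchy_AE_convergent_subseq:
  fixes fs :: "nat \<Rightarrow> 'a \<Rightarrow> real"
  assumes meas[measurable]: "\<And>n. fs n \<in> borel_measurable M"
    and bound: "\<And>n. AE \<omega> in M. \<bar>fs n \<omega>\<bar> \<le> B"
    and Cauchy: "\<And>e. 0 < e \<Longrightarrow> \<exists>N. \<forall>i\<ge>N. \<forall>j\<ge>N. (\<integral>\<omega>. (fs i \<omega> - fs j \<omega>)\<^sup>2 \<partial>M) < e"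
  obtains r f where "strict_mono r" "f \<in> borel_measurable M" "AE \<omega> in M. \<bar>f \<omega>\<bar> \<le> B"
    "AE \<omega> in M. (\<lambda>i. fs (r i) \<omega>) \<longlonglongrightarrow> f \<omega>"
proof -
  have L1_Cauchy: "\<exists>N. \<forall>i\<ge>N. \<forall>j\<ge>N. (LINT \<omega>|M. norm (fs i \<omega> - fs j \<omega>)) < e" if e: "0 < e" for e
  proof -
    obtain N where N: "\<forall>i\<ge>N. \<forall>j\<ge>N. (\<integral>\<omega>. (fs i \<omega> - fs j \<omega>)\<^sup>2 \<partial>M) < e\<^sup>2 / 2"
      using Cauchy[of "e\<^sup>2 / 2"] e by auto
    have "(LINT \<omega>|M. norm (fs i \<omega> - fs j \<omega>)) < e" if "i \<ge> N" "j \<ge> N" for i j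
    proof -
      have diff_bound: "AE \<omega> in M. \<bar>fs i \<omega> - fs j \<omega>\<bar> \<le> 2 * B"
        using bound[of i] bound[of j] by eventually_elim auto
      have "(LINT \<omega>|M. norm (fs i \<omega> - fs j \<omega>)) \<le> (\<integral>\<omega>. (fs i \<omega> - fs j \<omega>)\<^sup>2 \<partial>M) / e + e / 4"
        unfolding real_norm_def
        by (rule integral_abs_le_integral_sq[OF _ diff_bound e]) measurable
      also have "\<dots> < (e\<^sup>2 / 2) / e + e / 4"
        using divide_strict_right_mono[OF N[rule_format, OF that] e] by simp
      also have "\<dots> < e" using e by (simp add: power2_eq_square)
      finally show ?thesis .
    qed
    then show ?thesis by blast
  qed
  have integrable: "integrable M (fs n)" for n
    using bound[of n] by (intro integrable_const_bound[where B=B]) auto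
  obtain r where r: "strict_mono r" "AE \<omega> in M. Cauchy (\<lambda>i. fs (r i) \<omega>)"
    using cauchy_L1_AE_cauchy_subseq[OF integrable L1_Cauchy] by blast
  define f where "f \<omega> = lim (\<lambda>i. fs (r i) \<omega>)" for \<omega>
  have f_meas: "f \<in> borel_measurable M" unfolding f_def by measurable
  have conv: "AE \<omega> in M. (\<lambda>i. fs (r i) \<omega>) \<longlonglongrightarrow> f \<omega>"
    using r(2) by eventually_elim (simp add: f_def Cauchy_convergent_iff convergent_LIMSEQ_iff)
  have "AE \<omega> in M. \<forall>n. \<bar>fs n \<omega>\<bar> \<le> B" using bound by (simp add: AE_all_countable)
  then have f_bound: "AE \<omega> in M. \<bar>f \<omega>\<bar> \<le> B"
    using conv by eventually_elim (metis LIMSEQ_le_const2 tendsto_rabs)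
  show ?thesis by (rule that[OF r(1) f_meas f_bound conv])
qed

end

section \<open>Averaging schemes\<close>

text \<open>A scheme encodes the convex combination \<open>\<Sum> p\<^sub>w T\<^bsub>\<Sigma>w\<^esub>\<close> of translates as weight/step-list pairs.\<close>

type_synonym 'b scheme = "(real \<times> 'b list) list"

definition avg_scheme :: "'b set \<Rightarrow> 'b scheme \<Rightarrow> bool" where
  "avg_scheme R ms \<longleftrightarrow> (\<forall>p\<in>set ms. 0 \<le> fst p \<and> set (snd p) \<subseteq> R) \<and> sum_list (map fst ms) = 1"

definition scheme_comp :: "'b scheme \<Rightarrow> 'b scheme \<Rightarrow> 'b scheme" where
  "scheme_comp ms2 ms1 = concat (map (\<lambda>q. map (\<lambda>p. (fst q * fst p, snd p @ snd q)) ms1) ms2)"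

definition scheme_mid :: "'b scheme \<Rightarrow> 'b scheme \<Rightarrow> 'b scheme" where
  "scheme_mid ms1 ms2 = map (\<lambda>p. (fst p / 2, snd p)) ms1 @ map (\<lambda>p. (fst p / 2, snd p)) ms2"

definition scheme_shift :: "'b \<Rightarrow> 'b scheme \<Rightarrow> 'b scheme" where
  "scheme_shift r ms = map (\<lambda>p. (fst p, r # snd p)) ms"

lemma sum_weights_halved: "sum_list (map fst (map (\<lambda>p. (fst p / 2, snd p)) ms)) = sum_list (map fst ms) / 2"
  for ms :: "'b scheme"
  by (induction ms) auto

lemma avg_scheme_unit: "avg_scheme R [(1, [])]"
  by (simp add: avg_scheme_def)

lemma avg_scheme_comp:
  assumes "avg_scheme R ms1" "avg_scheme R ms2"
  shows "avg_scheme R (scheme_comp ms2 ms1)"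
proof -
  have "sum_list (map fst (scheme_comp ms2 ms1)) = sum_list (map fst ms2) * sum_list (map fst ms1)"
    by (induction ms2) (auto simp: scheme_comp_def o_def sum_list_const_mult algebra_simps)
  with assms show ?thesis unfolding avg_scheme_def by (auto simp: scheme_comp_def)
qed

lemma avg_scheme_mid: "avg_scheme R ms1 \<Longrightarrow> avg_scheme R ms2 \<Longrightarrow> avg_scheme R (scheme_mid ms1 ms2)"
  unfolding avg_scheme_def scheme_mid_def by (fastforce simp: sum_weights_halved simp del: map_map)

lemma avg_scheme_shift: "r \<in> R \<Longrightarrow> avg_scheme R ms \<Longrightarrow> avg_scheme R (scheme_shift r ms)"
  unfolding avg_scheme_def scheme_shift_def by (auto simp: o_def)

section \<open>Ergodic averages\<close>

locale ergodic_Zd_action =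
  fixes M :: "'a measure" and T :: "int^'d \<Rightarrow> 'a \<Rightarrow> 'a"
  assumes ergodic: "ergodic_action M T"
begin

sublocale prob_space M
  using ergodic by (simp add: ergodic_action_def)

lemma T_measurable[measurable]: "T x \<in> measurable M M"
  using ergodic by (simp add: ergodic_action_def)

lemma T_space: "\<omega> \<in> space M \<Longrightarrow> T x \<omega> \<in> space M"
  by (rule measurable_space[OF T_measurable])

lemma T_add: "\<omega> \<in> space M \<Longrightarrow> T (x + y) \<omega> = T x (T y \<omega>)"
  using ergodic by (simp add: ergodic_action_def)

lemma T_zero: "\<omega> \<in> space M \<Longrightarrow> T 0 \<omega> = \<omega>"
  using ergodic by (simp add: ergodic_action_def)

lemma distr_T: "distr M M (T x) = M"
  using ergodic by (simp add: ergodic_action_def)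

lemma invariant_set_trivial:
  "A \<in> sets M \<Longrightarrow> (\<And>x. T x -` A \<inter> space M = A) \<Longrightarrow> prob A = 0 \<or> prob A = 1"
  using ergodic unfolding ergodic_action_def by blast

lemma integrable_T: "integrable M (f::'a \<Rightarrow> real) \<Longrightarrow> integrable M (\<lambda>\<omega>. f (T x \<omega>))"
  by (rule integrable_distr[OF T_measurable]) (simp add: distr_T)

lemma integral_T: "(f::'a \<Rightarrow> real) \<in> borel_measurable M \<Longrightarrow> (\<integral>\<omega>. f (T x \<omega>) \<partial>M) = integral\<^sup>L M f"
  using integral_distr[OF T_measurable, of f x] by (simp add: distr_T)

lemma AE_T: "AE \<omega> in M. P \<omega> \<Longrightarrow> AE \<omega> in M. P (T x \<omega>)"
  by (rule AE_distrD[OF T_measurable]) (subst distr_T, assumption)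

definition shift_avg :: "(int^'d) scheme \<Rightarrow> ('a \<Rightarrow> real) \<Rightarrow> 'a \<Rightarrow> real" where
  "shift_avg ms g \<omega> = (\<Sum>p\<leftarrow>ms. fst p * g (T (sum_list (snd p)) \<omega>))"

lemma shift_avg_Nil[simp]: "shift_avg [] g \<omega> = 0"
  by (simp add: shift_avg_def)

lemma shift_avg_Cons[simp]: "shift_avg (p # ms) g \<omega> = fst p * g (T (sum_list (snd p)) \<omega>) + shift_avg ms g \<omega>"
  by (simp add: shift_avg_def)

lemma shift_avg_append[simp]: "shift_avg (ms1 @ ms2) g \<omega> = shift_avg ms1 g \<omega> + shift_avg ms2 g \<omega>"
  by (simp add: shift_avg_def)

lemma shift_avg_mid: "shift_avg (scheme_mid ms1 ms2) g \<omega> = (shift_avg ms1 g \<omega> + shift_avg ms2 g \<omega>) / 2"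
proof -
  have halved: "shift_avg (map (\<lambda>p. (fst p / 2, snd p)) ms) g \<omega> = shift_avg ms g \<omega> / 2" for ms
    by (induction ms) (auto simp: field_simps)
  show ?thesis
    by (simp only: scheme_mid_def shift_avg_append halved) (simp add: add_divide_distrib)
qed

lemma shift_avg_shift: "\<omega> \<in> space M \<Longrightarrow> shift_avg (scheme_shift r ms) g \<omega> = shift_avg ms g (T r \<omega>)"
  by (induction ms) (simp_all add: scheme_shift_def T_add[symmetric] add.commute)

lemma shift_avg_comp: "\<omega> \<in> space M \<Longrightarrow> shift_avg (scheme_comp ms2 ms1) g \<omega> = shift_avg ms2 (shift_avg ms1 g) \<omega>"
proof (induction ms2)
  case (Cons q ms2)
  have "shift_avg (map (\<lambda>p. (fst q * fst p, snd p @ snd q)) ms1) g \<omega>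
      = fst q * shift_avg ms1 g (T (sum_list (snd q)) \<omega>)"
    by (induction ms1) (auto simp: T_add[OF Cons.prems] algebra_simps)
  with Cons show ?case by (simp add: scheme_comp_def)
qed (simp add: scheme_comp_def)

lemma shift_avg_diff: "shift_avg ms (\<lambda>\<omega>. f \<omega> - g \<omega>) \<omega> = shift_avg ms f \<omega> - shift_avg ms g \<omega>"
  by (induction ms) (auto simp: algebra_simps)

lemma borel_measurable_shift_avg[measurable]:
  "g \<in> borel_measurable M \<Longrightarrow> shift_avg ms g \<in> borel_measurable M"
  unfolding shift_avg_def[abs_def] by (induction ms) simp_all

lemma abs_shift_avg_le:
  assumes "avg_scheme R ms" "\<forall>\<omega>\<in>space M. \<bar>g \<omega>\<bar> \<le> B" "\<omega> \<in> space M"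
  shows "\<bar>shift_avg ms g \<omega>\<bar> \<le> B"
proof -
  have "(\<forall>p\<in>set ms. 0 \<le> fst p) \<Longrightarrow> \<bar>shift_avg ms g \<omega>\<bar> \<le> sum_list (map fst ms) * B"
  proof (induction ms)
    case (Cons p ms)
    have "\<bar>g (T (sum_list (snd p)) \<omega>)\<bar> \<le> B" using assms(2,3) T_space by blast
    then have "\<bar>fst p * g (T (sum_list (snd p)) \<omega>)\<bar> \<le> fst p * B"
      using Cons.prems by (simp add: abs_mult mult_left_mono)
    with Cons show ?case by (simp add: algebra_simps)
  qed simp
  with assms(1) show ?thesis by (simp add: avg_scheme_def)
qed

lemma integrable_shift_avg: "integrable M g \<Longrightarrow> integrable M (shift_avg ms g)"
  unfolding shift_avg_def[abs_def] by (induction ms) (simp_all add: integrable_T)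

lemma integral_shift_avg:
  assumes "integrable M g" "avg_scheme R ms"
  shows "integral\<^sup>L M (shift_avg ms g) = integral\<^sup>L M g"
proof -
  have "integral\<^sup>L M (shift_avg ms g) = sum_list (map fst ms) * integral\<^sup>L M g"
  proof (induction ms)
    case (Cons p ms)
    have "integral\<^sup>L M (\<lambda>\<omega>. fst p * g (T (sum_list (snd p)) \<omega>) + shift_avg ms g \<omega>)
        = fst p * integral\<^sup>L M g + integral\<^sup>L M (shift_avg ms g)"
      using assms(1) by (simp add: integrable_T integrable_shift_avg integral_T)
    with Cons show ?case by (simp add: algebra_simps)
  qed (simp add: shift_avg_def[abs_def])
  with assms(2) show ?thesis by (simp add: avg_scheme_def)
qed

lemma integral_abs_shift_avg_le:
  assumes "integrable M g" "avg_scheme R ms"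
  shows "(\<integral>\<omega>. \<bar>shift_avg ms g \<omega>\<bar> \<partial>M) \<le> (\<integral>\<omega>. \<bar>g \<omega>\<bar> \<partial>M)"
proof -
  have "(\<integral>\<omega>. \<bar>shift_avg ms g \<omega>\<bar> \<partial>M) \<le> (\<integral>\<omega>. shift_avg ms (\<lambda>\<omega>. \<bar>g \<omega>\<bar>) \<omega> \<partial>M)"
  proof (rule integral_mono)
    have "\<forall>p\<in>set ms. 0 \<le> fst p" using assms(2) by (simp add: avg_scheme_def)
    then show "\<bar>shift_avg ms g \<omega>\<bar> \<le> shift_avg ms (\<lambda>\<omega>. \<bar>g \<omega>\<bar>) \<omega>" for \<omega>
      by (induction ms) (auto simp: abs_mult intro!: abs_triangle_ineq[THEN order_trans] add_mono)
  qed (use assms(1) in \<open>auto intro: integrable_shift_avg\<close>)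
  also have "\<dots> = (\<integral>\<omega>. \<bar>g \<omega>\<bar> \<partial>M)"
    using assms by (intro integral_shift_avg) auto
  finally show ?thesis .
qed

lemma invariant_AE_nonpos:
  fixes h :: "'a \<Rightarrow> real"
  assumes h: "integrable M h" "integral\<^sup>L M h = 0" and inv: "\<And>x. AE \<omega> in M. h (T x \<omega>) = h \<omega>"
  shows "AE \<omega> in M. h \<omega> \<le> 0"
proof -
  have hm[measurable]: "h \<in> borel_measurable M" using h by auto
  define A where "A = {\<omega>\<in>space M. \<forall>x. 0 < h (T x \<omega>)}"
  have A_sets: "A \<in> sets M" unfolding A_def by measurable
  have A_inv: "T y -` A \<inter> space M = A" for y
  proof -
    have "(\<forall>x. 0 < h (T x (T y \<omega>))) \<longleftrightarrow> (\<forall>x. 0 < h (T x \<omega>))" if "\<omega> \<in> space M" for \<omega>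
      using T_add[OF that] by (metis diff_add_cancel)
    then show ?thesis by (auto simp: A_def T_space)
  qed
  have "AE \<omega> in M. \<forall>x. h (T x \<omega>) = h \<omega>" using inv by (simp add: AE_all_countable)
  then have A_pos: "AE \<omega> in M. \<omega> \<in> A \<longleftrightarrow> 0 < h \<omega>"
    using AE_space by eventually_elim (auto simp: A_def)
  from invariant_set_trivial[OF A_sets A_inv] show ?thesis
  proof
    assume "prob A = 0"
    then have "AE \<omega> in M. \<omega> \<notin> A" using prob_eq_0[OF A_sets] by simp
    with A_pos show ?thesis by eventually_elim auto
  next
    assume "prob A = 1"
    then have "AE \<omega> in M. \<omega> \<in> A" using prob_eq_1[OF A_sets] by simp
    with A_pos have pos: "AE \<omega> in M. 0 < h \<omega>" by eventually_elim auto
    then have "AE \<omega> in M. 0 \<le> h \<omega>" by eventually_elim simp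
    then have "AE \<omega> in M. h \<omega> = 0" using integral_nonneg_eq_0_iff_AE[OF h(1)] h(2) by simp
    with pos have "AE \<omega> in M. False" by eventually_elim auto
    then show ?thesis by simp
  qed
qed

lemma invariant_mean_zero_AE_zero:
  fixes f :: "'a \<Rightarrow> real"
  assumes "integrable M f" "integral\<^sup>L M f = 0" "\<And>x. AE \<omega> in M. f (T x \<omega>) = f \<omega>"
  shows "AE \<omega> in M. f \<omega> = 0"
proof -
  have "AE \<omega> in M. f \<omega> \<le> 0" using invariant_AE_nonpos[OF assms] .
  moreover have "AE \<omega> in M. - f \<omega> \<le> 0"
    using invariant_AE_nonpos[of "\<lambda>\<omega>. - f \<omega>"] assms by simp
  ultimately show ?thesis by eventually_elim auto
qed

lemma AE_invariant_zgen:
  assumes "x \<in> zgen R" and inv: "\<And>r. r \<in> R \<Longrightarrow> AE \<omega> in M. f (T r \<omega>) = f \<omega>"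
  shows "AE \<omega> in M. f (T x \<omega>) = f \<omega>"
  using assms(1)
proof induction
  case zgen_zero
  show ?case using AE_space by eventually_elim (simp add: T_zero)
next
  case (zgen_add x r)
  show ?case using AE_T[OF zgen_add.IH, of r] inv[OF zgen_add.hyps(2)] AE_space
    by eventually_elim (simp add: T_add)
next
  case (zgen_diff x r)
  show ?case using AE_T[OF zgen_diff.IH, of "-r"] AE_T[OF inv[OF zgen_diff.hyps(2)], of "-r"] AE_space
  proof eventually_elim
    case (elim \<omega>)
    have "T r (T (-r) \<omega>) = \<omega>" using T_add[OF elim(3), of r "-r"] T_zero[OF elim(3)] by simp
    moreover have "T (x - r) \<omega> = T x (T (-r) \<omega>)" using T_add[OF elim(3), of x "-r"] by simp
    ultimately show ?case using elim by simp
  qed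
qed

lemma integral_sq_T_diff_le:
  fixes f g :: "'a \<Rightarrow> real"
  assumes [measurable]: "f \<in> borel_measurable M" "g \<in> borel_measurable M"
    and bound: "AE \<omega> in M. \<bar>f \<omega>\<bar> \<le> B" "AE \<omega> in M. \<bar>g \<omega>\<bar> \<le> B"
  shows "(\<integral>\<omega>. (f (T x \<omega>) - f \<omega>)\<^sup>2 \<partial>M)
    \<le> 3 * (2 * (\<integral>\<omega>. (g \<omega> - f \<omega>)\<^sup>2 \<partial>M) + (\<integral>\<omega>. (g \<omega> - g (T x \<omega>))\<^sup>2 \<partial>M))"
proof -
  have T_bound: "AE \<omega> in M. \<bar>f (T x \<omega>)\<bar> \<le> B" "AE \<omega> in M. \<bar>g (T x \<omega>)\<bar> \<le> B"
    using AE_T[OF bound(1)] AE_T[OF bound(2)] .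
  have I1: "integrable M (\<lambda>\<omega>. (f (T x \<omega>) - g (T x \<omega>))\<^sup>2)"
    and I2: "integrable M (\<lambda>\<omega>. (g \<omega> - g (T x \<omega>))\<^sup>2)"
    and I3: "integrable M (\<lambda>\<omega>. (g \<omega> - f \<omega>)\<^sup>2)"
    and I4: "integrable M (\<lambda>\<omega>. (f (T x \<omega>) - f \<omega>)\<^sup>2)"
    by (rule integrable_sq_diff_bounded; use bound T_bound in measurable)+
  have "(\<integral>\<omega>. (f (T x \<omega>) - f \<omega>)\<^sup>2 \<partial>M)
      \<le> (\<integral>\<omega>. 3 * ((f (T x \<omega>) - g (T x \<omega>))\<^sup>2 + (g \<omega> - g (T x \<omega>))\<^sup>2 + (g \<omega> - f \<omega>)\<^sup>2) \<partial>M)"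
    using I1 I2 I3 I4 power2_diff_le_three_steps by (intro integral_mono) auto
  also have "\<dots> = 3 * ((\<integral>\<omega>. (f (T x \<omega>) - g (T x \<omega>))\<^sup>2 \<partial>M)
      + (\<integral>\<omega>. (g \<omega> - g (T x \<omega>))\<^sup>2 \<partial>M) + (\<integral>\<omega>. (g \<omega> - f \<omega>)\<^sup>2 \<partial>M))"
    using I1 I2 I3 by simp
  also have "(\<integral>\<omega>. (f (T x \<omega>) - g (T x \<omega>))\<^sup>2 \<partial>M) = (\<integral>\<omega>. (g \<omega> - f \<omega>)\<^sup>2 \<partial>M)"
    using integral_T[of "\<lambda>\<omega>. (g \<omega> - f \<omega>)\<^sup>2" x] by (simp add: power2_commute)
  finally show ?thesis by simp
qed

lemma L2_limit_T_invariant: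
  fixes fs :: "nat \<Rightarrow> 'a \<Rightarrow> real"
  assumes meas[measurable]: "\<And>n. fs n \<in> borel_measurable M" "f \<in> borel_measurable M"
    and bound: "\<And>n. AE \<omega> in M. \<bar>fs n \<omega>\<bar> \<le> B" "AE \<omega> in M. \<bar>f \<omega>\<bar> \<le> B"
    and conv: "AE \<omega> in M. (\<lambda>n. fs n \<omega>) \<longlonglongrightarrow> f \<omega>"
    and shift: "(\<lambda>n. \<integral>\<omega>. (fs n \<omega> - fs n (T x \<omega>))\<^sup>2 \<partial>M) \<longlonglongrightarrow> 0"
  shows "AE \<omega> in M. f (T x \<omega>) = f \<omega>"
proof -
  define D where "D = (\<integral>\<omega>. (f (T x \<omega>) - f \<omega>)\<^sup>2 \<partial>M)"
  have "(\<lambda>n. \<integral>\<omega>. (fs n \<omega> - f \<omega>)\<^sup>2 \<partial>M) \<longlonglongrightarrow> (\<integral>\<omega>. 0 \<partial>M)"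
  proof (rule tendsto_integral_bounded[where B="(2 * B)\<^sup>2"])
    show "AE \<omega> in M. \<bar>(fs n \<omega> - f \<omega>)\<^sup>2\<bar> \<le> (2 * B)\<^sup>2" for n
      using bound(1)[of n] bound(2) by eventually_elim (rule abs_power2_le, linarith)
    show "AE \<omega> in M. (\<lambda>n. (fs n \<omega> - f \<omega>)\<^sup>2) \<longlonglongrightarrow> 0"
      using conv by eventually_elim (metis LIM_zero power_zero_numeral tendsto_power)
  qed simp_all
  then have "(\<lambda>n. 3 * (2 * (\<integral>\<omega>. (fs n \<omega> - f \<omega>)\<^sup>2 \<partial>M) + (\<integral>\<omega>. (fs n \<omega> - fs n (T x \<omega>))\<^sup>2 \<partial>M)))
      \<longlonglongrightarrow> 3 * (2 * 0 + 0)"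
    using shift by (intro tendsto_intros) simp_all
  then have "D \<le> 0"
    unfolding D_def using integral_sq_T_diff_le[OF meas(2,1) bound(2,1)] by (intro LIMSEQ_le_const) auto
  moreover have "0 \<le> D" unfolding D_def by (rule integral_nonneg_AE) simp
  ultimately have "D = 0" by simp
  moreover have "integrable M (\<lambda>\<omega>. (f (T x \<omega>) - f \<omega>)\<^sup>2)"
    using AE_T[OF bound(2)] bound(2) by (intro integrable_sq_diff_bounded) simp_all
  ultimately have "AE \<omega> in M. (f (T x \<omega>) - f \<omega>)\<^sup>2 = 0"
    by (subst integral_nonneg_eq_0_iff_AE[symmetric]) (auto simp: D_def)
  then show ?thesis by eventually_elim simp
qed

definition avg_L2_inf :: "(int^'d) set \<Rightarrow> ('a \<Rightarrow> real) \<Rightarrow> real" where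
  "avg_L2_inf R g = (INF ms\<in>{ms. avg_scheme R ms}. \<integral>\<omega>. (shift_avg ms g \<omega>)\<^sup>2 \<partial>M)"

lemma avg_L2_inf_le: "avg_scheme R ms \<Longrightarrow> avg_L2_inf R g \<le> (\<integral>\<omega>. (shift_avg ms g \<omega>)\<^sup>2 \<partial>M)"
  unfolding avg_L2_inf_def
  by (rule cINF_lower) (auto intro!: bdd_belowI2[where m=0] integral_nonneg_AE)

lemma avg_L2_inf_approx:
  assumes "0 < e"
  obtains ms where "avg_scheme R ms" "(\<integral>\<omega>. (shift_avg ms g \<omega>)\<^sup>2 \<partial>M) < avg_L2_inf R g + e"
proof -
  let ?Q = "\<lambda>ms. \<integral>\<omega>. (shift_avg ms g \<omega>)\<^sup>2 \<partial>M"
  have "?Q ` {ms. avg_scheme R ms} \<noteq> {}" using avg_scheme_unit by blast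
  moreover have "Inf (?Q ` {ms. avg_scheme R ms}) < avg_L2_inf R g + e"
    using assms by (simp add: avg_L2_inf_def)
  ultimately have "\<exists>y\<in>?Q ` {ms. avg_scheme R ms}. y < avg_L2_inf R g + e" by (rule cInf_lessD)
  then show ?thesis using that by auto
qed

context
  fixes g :: "'a \<Rightarrow> real" and B :: real
  assumes g_meas[measurable]: "g \<in> borel_measurable M" and g_bound: "\<forall>\<omega>\<in>space M. \<bar>g \<omega>\<bar> \<le> B"
begin

lemma AE_abs_shift_avg_le: "avg_scheme R ms \<Longrightarrow> AE \<omega> in M. \<bar>shift_avg ms g \<omega>\<bar> \<le> B"
  using abs_shift_avg_le[OF _ g_bound] by (auto intro: AE_I2)

lemma L2_diff_shift_avg_le:
  assumes "avg_scheme R ms1" "avg_scheme R ms2"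
  shows "(\<integral>\<omega>. (shift_avg ms1 g \<omega> - shift_avg ms2 g \<omega>)\<^sup>2 \<partial>M)
    \<le> 2 * (\<integral>\<omega>. (shift_avg ms1 g \<omega>)\<^sup>2 \<partial>M) + 2 * (\<integral>\<omega>. (shift_avg ms2 g \<omega>)\<^sup>2 \<partial>M) - 4 * avg_L2_inf R g"
proof -
  have "avg_L2_inf R g \<le> (\<integral>\<omega>. ((shift_avg ms1 g \<omega> + shift_avg ms2 g \<omega>) / 2)\<^sup>2 \<partial>M)"
    using avg_L2_inf_le[OF avg_scheme_mid[OF assms]] by (simp add: shift_avg_mid)
  then show ?thesis
    using integral_sq_diff_parallelogram[OF _ _ AE_abs_shift_avg_le[OF assms(1)] AE_abs_shift_avg_le[OF assms(2)]]
    by simp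
qed

text \<open>The translate by a generator is again a convex combination, so it cannot beat the infimum either.\<close>

lemma L2_shift_diff_shift_avg_le:
  assumes "avg_scheme R ms" "r \<in> R"
  shows "(\<integral>\<omega>. (shift_avg ms g \<omega> - shift_avg ms g (T r \<omega>))\<^sup>2 \<partial>M)
    \<le> 4 * (\<integral>\<omega>. (shift_avg ms g \<omega>)\<^sup>2 \<partial>M) - 4 * avg_L2_inf R g"
proof -
  have shifted: "(\<integral>\<omega>. h (shift_avg (scheme_shift r ms) g \<omega>) \<partial>M) = (\<integral>\<omega>. h (shift_avg ms g (T r \<omega>)) \<partial>M)"
    for h :: "real \<Rightarrow> real"
    by (rule Bochner_Integration.integral_cong) (simp_all add: shift_avg_shift)
  have "(\<integral>\<omega>. (shift_avg ms g (T r \<omega>))\<^sup>2 \<partial>M) = (\<integral>\<omega>. (shift_avg ms g \<omega>)\<^sup>2 \<partial>M)"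
    by (rule integral_T) measurable
  moreover have "(\<integral>\<omega>. (shift_avg ms g \<omega> - shift_avg ms g (T r \<omega>))\<^sup>2 \<partial>M)
      = (\<integral>\<omega>. (shift_avg ms g \<omega> - shift_avg (scheme_shift r ms) g \<omega>)\<^sup>2 \<partial>M)"
    by (rule Bochner_Integration.integral_cong) (simp_all add: shift_avg_shift)
  ultimately show ?thesis
    using L2_diff_shift_avg_le[OF assms(1) avg_scheme_shift[OF assms(2,1)]] shifted[of "\<lambda>x. x\<^sup>2"] by simp
qed
lemma avg_L2_inf_minimising_seq:
  obtains mss where "\<And>n. avg_scheme R (mss n)"
    "(\<lambda>n. \<integral>\<omega>. (shift_avg (mss n) g \<omega>)\<^sup>2 \<partial>M) \<longlonglongrightarrow> avg_L2_inf R g"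
proof -
  have "\<forall>n. \<exists>ms. avg_scheme R ms \<and> (\<integral>\<omega>. (shift_avg ms g \<omega>)\<^sup>2 \<partial>M) < avg_L2_inf R g + inverse (Suc n)"
    by (metis avg_L2_inf_approx inverse_positive_iff_positive of_nat_0_less_iff zero_less_Suc)
  then obtain mss where mss: "\<And>n. avg_scheme R (mss n)"
    "\<And>n. (\<integral>\<omega>. (shift_avg (mss n) g \<omega>)\<^sup>2 \<partial>M) < avg_L2_inf R g + inverse (Suc n)"
    by metis
  have upper: "(\<lambda>n. avg_L2_inf R g + inverse (Suc n)) \<longlonglongrightarrow> avg_L2_inf R g"
    using tendsto_add[OF tendsto_const LIMSEQ_inverse_real_of_nat] by simp
  have "(\<lambda>n. \<integral>\<omega>. (shift_avg (mss n) g \<omega>)\<^sup>2 \<partial>M) \<longlonglongrightarrow> avg_L2_inf R g"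
  proof (rule tendsto_sandwich[OF _ _ tendsto_const upper])
    show "\<forall>\<^sub>F n in sequentially. avg_L2_inf R g \<le> (\<integral>\<omega>. (shift_avg (mss n) g \<omega>)\<^sup>2 \<partial>M)"
      using mss(1) by (intro always_eventually allI avg_L2_inf_le)
    show "\<forall>\<^sub>F n in sequentially. (\<integral>\<omega>. (shift_avg (mss n) g \<omega>)\<^sup>2 \<partial>M) \<le> avg_L2_inf R g + inverse (Suc n)"
      using mss(2) by (intro always_eventually allI less_imp_le)
  qed
  with mss(1) show ?thesis by (rule that)
qed

context
  fixes R :: "(int^'d) set" and mss :: "nat \<Rightarrow> (int^'d) scheme"
  assumes schemes: "\<And>n. avg_scheme R (mss n)"
    and minimising: "(\<lambda>n. \<integral>\<omega>. (shift_avg (mss n) g \<omega>)\<^sup>2 \<partial>M) \<longlonglongrightarrow> avg_L2_inf R g"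
begin

lemma minimising_seq_L2_Cauchy:
  assumes "0 < e"
  shows "\<exists>N. \<forall>i\<ge>N. \<forall>j\<ge>N. (\<integral>\<omega>. (shift_avg (mss i) g \<omega> - shift_avg (mss j) g \<omega>)\<^sup>2 \<partial>M) < e"
proof -
  obtain N where N: "\<forall>n\<ge>N. (\<integral>\<omega>. (shift_avg (mss n) g \<omega>)\<^sup>2 \<partial>M) < avg_L2_inf R g + e / 4"
    using order_tendstoD(2)[OF minimising, where a="avg_L2_inf R g + e / 4"] assms
    by (auto simp: eventually_sequentially)
  have "(\<integral>\<omega>. (shift_avg (mss i) g \<omega> - shift_avg (mss j) g \<omega>)\<^sup>2 \<partial>M) < e" if "i \<ge> N" "j \<ge> N" for i j
  proof -
    have "(\<integral>\<omega>. (shift_avg (mss i) g \<omega>)\<^sup>2 \<partial>M) < avg_L2_inf R g + e / 4"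
      "(\<integral>\<omega>. (shift_avg (mss j) g \<omega>)\<^sup>2 \<partial>M) < avg_L2_inf R g + e / 4"
      using N that by auto
    then show ?thesis using L2_diff_shift_avg_le[OF schemes schemes, of i j] by linarith
  qed
  then show ?thesis by blast
qed

lemma minimising_seq_shift_L2:
  assumes "r \<in> R"
  shows "(\<lambda>n. \<integral>\<omega>. (shift_avg (mss n) g \<omega> - shift_avg (mss n) g (T r \<omega>))\<^sup>2 \<partial>M) \<longlonglongrightarrow> 0"
proof (rule tendsto_sandwich[OF _ _ tendsto_const])
  have "(\<lambda>n. 4 * (\<integral>\<omega>. (shift_avg (mss n) g \<omega>)\<^sup>2 \<partial>M) - 4 * avg_L2_inf R g)
      \<longlonglongrightarrow> 4 * avg_L2_inf R g - 4 * avg_L2_inf R g"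
    by (intro tendsto_intros minimising)
  then show "(\<lambda>n. 4 * (\<integral>\<omega>. (shift_avg (mss n) g \<omega>)\<^sup>2 \<partial>M) - 4 * avg_L2_inf R g) \<longlonglongrightarrow> 0"
    by simp
qed (use L2_shift_diff_shift_avg_le[OF schemes assms] in \<open>simp_all add: integral_nonneg_AE\<close>)

end

text \<open>The core of the mean ergodic theorem: a minimising sequence is \<open>L\<^sup>2\<close>-Cauchy by the
  parallelogram law, and its limit is invariant under the generators, hence zero.\<close>

lemma avg_L2_inf_eq_0:
  assumes gen: "zgen R = UNIV" and mean: "integral\<^sup>L M g = 0"
  shows "avg_L2_inf R g = 0"
proof -
  obtain mss where mss: "\<And>n. avg_scheme R (mss n)"
    "(\<lambda>n. \<integral>\<omega>. (shift_avg (mss n) g \<omega>)\<^sup>2 \<partial>M) \<longlonglongrightarrow> avg_L2_inf R g"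
    by (rule avg_L2_inf_minimising_seq[where R=R]) blast
  define fs where "fs n = shift_avg (mss n) g" for n
  have fs_meas[measurable]: "fs n \<in> borel_measurable M" for n unfolding fs_def by measurable
  have fs_bound: "AE \<omega> in M. \<bar>fs n \<omega>\<bar> \<le> B" for n
    unfolding fs_def by (rule AE_abs_shift_avg_le[OF mss(1)])
  obtain r f where r: "strict_mono r" and f_meas[measurable]: "f \<in> borel_measurable M"
    and f_bound: "AE \<omega> in M. \<bar>f \<omega>\<bar> \<le> B" and conv: "AE \<omega> in M. (\<lambda>i. fs (r i) \<omega>) \<longlonglongrightarrow> f \<omega>"
    using L2_Cauchy_AE_convergent_subseq[of fs B, OF fs_meas fs_bound]
      minimising_seq_L2_Cauchy[OF mss] unfolding fs_def by blast
  have "(\<lambda>i. \<integral>\<omega>. (fs (r i) \<omega>)\<^sup>2 \<partial>M) \<longlonglongrightarrow> (\<integral>\<omega>. (f \<omega>)\<^sup>2 \<partial>M)"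
  proof (rule tendsto_integral_bounded[where B="B\<^sup>2"])
    show "AE \<omega> in M. \<bar>(fs (r i) \<omega>)\<^sup>2\<bar> \<le> B\<^sup>2" for i
      using fs_bound[of "r i"] by eventually_elim (rule abs_power2_le)
    show "AE \<omega> in M. (\<lambda>i. (fs (r i) \<omega>)\<^sup>2) \<longlonglongrightarrow> (f \<omega>)\<^sup>2"
      using conv by eventually_elim (rule tendsto_power)
  qed simp_all
  moreover have "(\<lambda>i. \<integral>\<omega>. (fs (r i) \<omega>)\<^sup>2 \<partial>M) \<longlonglongrightarrow> avg_L2_inf R g"
    using LIMSEQ_subseq_LIMSEQ[OF mss(2) r] by (simp add: o_def fs_def)
  ultimately have f_L2: "(\<integral>\<omega>. (f \<omega>)\<^sup>2 \<partial>M) = avg_L2_inf R g" by (rule LIMSEQ_unique)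
  have "(\<lambda>i. integral\<^sup>L M (fs (r i))) \<longlonglongrightarrow> integral\<^sup>L M f"
    by (rule tendsto_integral_bounded[OF _ _ fs_bound conv]) simp_all
  moreover have "integral\<^sup>L M (fs n) = 0" for n
  proof -
    have "integrable M g" using g_bound by (intro integrable_const_bound[where B=B]) (auto intro: AE_I2)
    with mean show ?thesis by (simp add: fs_def integral_shift_avg[OF _ mss(1)])
  qed
  ultimately have f_mean: "integral\<^sup>L M f = 0" by (simp add: LIMSEQ_const_iff)
  have "AE \<omega> in M. f (T r0 \<omega>) = f \<omega>" if "r0 \<in> R" for r0
    using LIMSEQ_subseq_LIMSEQ[OF minimising_seq_shift_L2[OF mss that] r]
    by (intro L2_limit_T_invariant[of "\<lambda>i. fs (r i)" f B, OF _ _ fs_bound f_bound conv])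
      (simp_all add: o_def fs_def)
  then have "AE \<omega> in M. f (T x \<omega>) = f \<omega>" for x
    using gen by (intro AE_invariant_zgen[of x R]) simp_all
  moreover have "integrable M f"
    using f_bound by (intro integrable_const_bound[where B=B]) simp_all
  ultimately have "AE \<omega> in M. f \<omega> = 0" using f_mean by (intro invariant_mean_zero_AE_zero)
  then have "(\<integral>\<omega>. (f \<omega>)\<^sup>2 \<partial>M) = 0" by (intro integral_eq_zero_AE) auto
  with f_L2 show ?thesis by simp
qed

lemma shift_avg_L2_small:
  assumes "zgen R = UNIV" "integral\<^sup>L M g = 0" "0 < e"
  obtains ms where "avg_scheme R ms" "(\<integral>\<omega>. (shift_avg ms g \<omega>)\<^sup>2 \<partial>M) < e"
  using avg_L2_inf_approx[OF assms(3), of R g] avg_L2_inf_eq_0[OF assms(1,2)] by auto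

end

lemma shift_avg_L1_small:
  fixes g :: "'a \<Rightarrow> real"
  assumes gen: "zgen R = UNIV" and g: "integrable M g" "integral\<^sup>L M g = 0" and e: "0 < e"
  obtains ms where "avg_scheme R ms" "(\<integral>\<omega>. \<bar>shift_avg ms g \<omega>\<bar> \<partial>M) < e"
proof -
  obtain g' B where g': "g' \<in> borel_measurable M" "\<forall>\<omega>\<in>space M. \<bar>g' \<omega>\<bar> \<le> B" "integral\<^sup>L M g' = 0"
    and close: "(\<integral>\<omega>. \<bar>g \<omega> - g' \<omega>\<bar> \<partial>M) < e / 2"
    using bounded_mean_zero_L1_approx[OF g, of "e / 2"] e by auto
  have g'_integrable: "integrable M g'"
    using g'(1,2) by (intro integrable_const_bound[where B=B]) (auto intro: AE_I2)
  obtain ms where ms: "avg_scheme R ms" "(\<integral>\<omega>. (shift_avg ms g' \<omega>)\<^sup>2 \<partial>M) < (e / 4)\<^sup>2"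
    using shift_avg_L2_small[OF g'(1,2) gen g'(3), of "(e / 4)\<^sup>2"] e by auto
  have "(\<integral>\<omega>. \<bar>shift_avg ms g' \<omega>\<bar> \<partial>M) \<le> (\<integral>\<omega>. (shift_avg ms g' \<omega>)\<^sup>2 \<partial>M) / (e / 4) + (e / 4) / 4"
    using abs_shift_avg_le[OF ms(1) g'(2)] g'(1) e
    by (intro integral_abs_le_integral_sq[where B=B]) (auto intro: AE_I2)
  also have "\<dots> < (e / 4)\<^sup>2 / (e / 4) + (e / 4) / 4"
    using divide_strict_right_mono[OF ms(2), of "e / 4"] e by simp
  finally have bounded_part: "(\<integral>\<omega>. \<bar>shift_avg ms g' \<omega>\<bar> \<partial>M) < e / 2"
    using e by (simp add: power2_eq_square)
  have "(\<integral>\<omega>. \<bar>shift_avg ms (\<lambda>\<omega>. g \<omega> - g' \<omega>) \<omega>\<bar> \<partial>M) \<le> (\<integral>\<omega>. \<bar>g \<omega> - g' \<omega>\<bar> \<partial>M)"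
    using g(1) g'_integrable ms(1) by (intro integral_abs_shift_avg_le) auto
  with close have remainder: "(\<integral>\<omega>. \<bar>shift_avg ms (\<lambda>\<omega>. g \<omega> - g' \<omega>) \<omega>\<bar> \<partial>M) < e / 2" by simp
  have "(\<integral>\<omega>. \<bar>shift_avg ms g \<omega>\<bar> \<partial>M)
      \<le> (\<integral>\<omega>. \<bar>shift_avg ms g' \<omega>\<bar> + \<bar>shift_avg ms (\<lambda>\<omega>. g \<omega> - g' \<omega>) \<omega>\<bar> \<partial>M)"
    using integrable_shift_avg[OF g(1), of ms] integrable_shift_avg[OF g'_integrable, of ms]
    by (intro integral_mono) (auto simp: shift_avg_diff)
  also have "\<dots> < e"
    using bounded_part remainder g(1) g'_integrable by (simp add: integrable_shift_avg)
  finally show ?thesis using ms(1) that by blast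
qed

lemma shift_avg_L1_small_finite:
  fixes G :: "'z \<Rightarrow> 'a \<Rightarrow> real"
  assumes gen: "zgen R = UNIV" and "finite Z"
    and G: "\<And>z. z \<in> Z \<Longrightarrow> integrable M (G z)" "\<And>z. z \<in> Z \<Longrightarrow> integral\<^sup>L M (G z) = 0"
    and e: "0 < e"
  obtains ms where "avg_scheme R ms" "\<And>z. z \<in> Z \<Longrightarrow> (\<integral>\<omega>. \<bar>shift_avg ms (G z) \<omega>\<bar> \<partial>M) < e"
proof -
  have "\<exists>ms. avg_scheme R ms \<and> (\<forall>z\<in>Z. (\<integral>\<omega>. \<bar>shift_avg ms (G z) \<omega>\<bar> \<partial>M) < e)"
    using \<open>finite Z\<close> G
  proof (induction Z rule: finite_induct)
    case empty
    then show ?case using avg_scheme_unit by blast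
  next
    case (insert z0 Z)
    then obtain ms1 where ms1: "avg_scheme R ms1" "\<forall>z\<in>Z. (\<integral>\<omega>. \<bar>shift_avg ms1 (G z) \<omega>\<bar> \<partial>M) < e"
      by auto
    have G_avg: "integrable M (shift_avg ms1 (G z))" "integral\<^sup>L M (shift_avg ms1 (G z)) = integral\<^sup>L M (G z)"
      if "z \<in> insert z0 Z" for z
      using insert.prems that integral_shift_avg[OF _ ms1(1)] by (auto intro: integrable_shift_avg)
    obtain ms2 where ms2: "avg_scheme R ms2" "(\<integral>\<omega>. \<bar>shift_avg ms2 (shift_avg ms1 (G z0)) \<omega>\<bar> \<partial>M) < e"
      using shift_avg_L1_small[OF gen G_avg(1) _ e, of z0] G_avg(2)[of z0] insert.prems by auto
    have comp: "(\<integral>\<omega>. \<bar>shift_avg (scheme_comp ms2 ms1) (G z) \<omega>\<bar> \<partial>M)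
        = (\<integral>\<omega>. \<bar>shift_avg ms2 (shift_avg ms1 (G z)) \<omega>\<bar> \<partial>M)" for z
      by (rule Bochner_Integration.integral_cong) (simp_all add: shift_avg_comp)
    have "(\<integral>\<omega>. \<bar>shift_avg ms2 (shift_avg ms1 (G z)) \<omega>\<bar> \<partial>M) < e" if "z \<in> insert z0 Z" for z
    proof (cases "z = z0")
      case False
      then have "(\<integral>\<omega>. \<bar>shift_avg ms2 (shift_avg ms1 (G z)) \<omega>\<bar> \<partial>M) \<le> (\<integral>\<omega>. \<bar>shift_avg ms1 (G z) \<omega>\<bar> \<partial>M)"
        using G_avg(1)[OF that] ms2(1) by (rule_tac integral_abs_shift_avg_le)
      with False that ms1(2) show ?thesis by fastforce
    qed (use ms2(2) in simp)
    then show ?case using avg_scheme_comp[OF ms1(1) ms2(1)] comp by auto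
  qed
  then show ?thesis using that by blast
qed

end

section \<open>Path sums of a cocycle\<close>

lemma pathsum_Nil[simp]: "pathsum T F \<eta> [] = 0"
  by (simp add: pathsum_def)

lemma pathsum_Cons: "pathsum T F \<eta> (a # as) = F (fst \<eta>) (snd \<eta>) a + pathsum T F (Sshift T a \<eta>) as"
  unfolding pathsum_def traj_def length_Cons sum.lessThan_Suc_shift by simp

lemma pathsum_append:
  "pathsum T F \<eta> (as @ bs) = pathsum T F \<eta> as + pathsum T F (fold (Sshift T) as \<eta>) bs"
  by (induction as arbitrary: \<eta>) (simp_all add: pathsum_Cons)

lemma traj_length: "traj T \<eta> as (length as) = fold (Sshift T) as \<eta>"
  by (simp add: traj_def)

context ergodic_Zd_action
begin

lemma fold_Sshift_eq:
  assumes \<omega>: "\<omega> \<in> space M" and "length zs = l"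
  shows "fold (Sshift T) as (\<omega>, zs)
    = (T (sum_list (take (length as) (zs @ as))) \<omega>, drop (length as) (zs @ as))"
proof (induction as rule: rev_induct)
  case Nil
  then show ?case using T_zero[OF \<omega>] by simp
next
  case (snoc a as)
  define n where "n = length as"
  define L where "L = zs @ as"
  have "fold (Sshift T) (as @ [a]) (\<omega>, zs) = Sshift T a (T (sum_list (take n L)) \<omega>, drop n L)"
    using snoc by (simp add: n_def L_def)
  also have "\<dots> = (T (sum_list (take (Suc n) (L @ [a]))) \<omega>, drop (Suc n) (L @ [a]))"
  proof (cases "drop n L")
    case Nil
    then have "n \<ge> length L" by simp
    then show ?thesis
      using Nil T_add[OF \<omega>, of a "sum_list L"] by (simp add: Sshift_def add.commute)
  next
    case (Cons b bs)
    then have n: "n < length L" by (metis drop_eq_Nil not_le_imp_less list.distinct(1))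
    have "L ! n = b" using Cons hd_drop_conv_nth[OF n] by simp
    moreover have "drop (Suc n) L = bs" using Cons by (metis drop_Suc list.sel(3) tl_drop)
    ultimately have "take (Suc n) (L @ [a]) = take n L @ [b]" "drop (Suc n) (L @ [a]) = bs @ [a]"
      using n by (simp_all add: take_Suc_conv_app_nth drop_append)
    then show ?thesis
      using Cons T_add[OF \<omega>, of b "sum_list (take n L)"] by (simp add: Sshift_def add.commute)
  qed
  finally show ?case by (simp add: n_def L_def)
qed

end

lemma Sshift_eq_Pair:
  obtains y b where "\<And>\<omega>. Sshift T z (\<omega>, zs) = (T y \<omega>, b)" "set b \<subseteq> insert z (set zs)" "length b = length zs"
proof (cases zs)
  case Nil
  then show ?thesis by (intro that[of z "[]"]) (simp_all add: Sshift_def)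
next
  case (Cons a as)
  then show ?thesis by (intro that[of a "as @ [z]"]) (auto simp: Sshift_def)
qed

locale classK_cocycle = ergodic_Zd_action M T for M :: "'a measure" and T :: "int^'d \<Rightarrow> 'a \<Rightarrow> 'a" +
  fixes R :: "(int^'d) set" and l :: nat and F :: "'a \<Rightarrow> (int^'d) list \<Rightarrow> int^'d \<Rightarrow> real"
  assumes finite_R: "finite R" and generates: "zgen R = UNIV" and F_classK: "classK M T R l F"
begin

lemma integrable_F: "set zs \<subseteq> R \<Longrightarrow> length zs = l \<Longrightarrow> z \<in> R \<Longrightarrow> integrable M (\<lambda>\<omega>. F \<omega> zs z)"
  using F_classK unfolding classK_def by blast

lemma integral_pathsum_eq_0:
  "set as \<subseteq> R \<Longrightarrow> l \<le> length as \<Longrightarrow> (\<integral>\<omega>. pathsum T F (\<omega>, drop (length as - l) as) as \<partial>M) = 0"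
  using F_classK unfolding classK_def by blast

definition path_independent :: "'a \<Rightarrow> bool" where
  "path_independent \<omega> \<longleftrightarrow> (\<forall>zs as bs. set zs \<subseteq> R \<longrightarrow> length zs = l \<longrightarrow> set as \<subseteq> R \<longrightarrow> set bs \<subseteq> R \<longrightarrow>
     traj T (\<omega>, zs) as (length as) = traj T (\<omega>, zs) bs (length bs) \<longrightarrow>
     pathsum T F (\<omega>, zs) as = pathsum T F (\<omega>, zs) bs)"

lemma AE_path_independent: "AE \<omega> in M. path_independent \<omega>"
  using F_classK unfolding classK_def path_independent_def by blast

lemma R_nonempty: "R \<noteq> {}"
proof
  assume R_empty: "R = {}"
  have "x \<in> zgen R \<Longrightarrow> x = 0" for x by (induction rule: zgen.induct) (use R_empty in auto)
  then have "((\<chi> i. 1) :: int^'d) = 0" using generates by simp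
  then have "((\<chi> i. 1) :: int^'d) $ undefined = (0::int^'d) $ undefined" by simp
  then show False by simp
qed

definition ref_hist :: "(int^'d) list" where
  "ref_hist = replicate l (SOME r. r \<in> R)"

lemma set_ref_hist: "set ref_hist \<subseteq> R" and length_ref_hist: "length ref_hist = l"
  using some_in_eq[of R] R_nonempty by (auto simp: ref_hist_def)

lemma integrable_pathsum:
  assumes zs: "set zs \<subseteq> R" "length zs = l" and as: "set as \<subseteq> R"
  shows "integrable M (\<lambda>\<omega>. pathsum T F (\<omega>, zs) as)"
proof -
  define ys where "ys i = zs @ take i as" for i
  have "integrable M (\<lambda>\<omega>. \<Sum>i<length as. F (T (sum_list (take i (ys i))) \<omega>) (drop i (ys i)) (as ! i))"
  proof (rule Bochner_Integration.integrable_sum)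
    fix i assume i: "i \<in> {..<length as}"
    have "set (ys i) \<subseteq> R" using zs as set_take_subset[of i as] by (auto simp: ys_def)
    then have "set (drop i (ys i)) \<subseteq> R" using set_drop_subset by (metis order_trans)
    moreover have "length (drop i (ys i)) = l" using zs i by (simp add: ys_def)
    ultimately show "integrable M (\<lambda>\<omega>. F (T (sum_list (take i (ys i))) \<omega>) (drop i (ys i)) (as ! i))"
      using as i by (intro integrable_T integrable_F) auto
  qed
  moreover have "pathsum T F (\<omega>, zs) as
      = (\<Sum>i<length as. F (T (sum_list (take i (ys i))) \<omega>) (drop i (ys i)) (as ! i))"
    if "\<omega> \<in> space M" for \<omega>
    unfolding pathsum_def traj_def
  proof (rule sum.cong)
    fix i assume "i \<in> {..<length as}"
    then have "length (take i as) = i" by simp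
    then show "F (fst (fold (Sshift T) (take i as) (\<omega>, zs))) (snd (fold (Sshift T) (take i as) (\<omega>, zs))) (as ! i)
      = F (T (sum_list (take i (ys i))) \<omega>) (drop i (ys i)) (as ! i)"
      using fold_Sshift_eq[OF that zs(2), of "take i as"] by (simp add: ys_def)
  qed simp
  ultimately show ?thesis by (simp cong: Bochner_Integration.integrable_cong)
qed

text \<open>The function \<open>G\<^sub>z\<close>, with \<open>c = ref_hist\<close>; it has mean zero by property (ii) of the class.\<close>

definition ref_incr :: "int^'d \<Rightarrow> 'a \<Rightarrow> real" where
  "ref_incr z \<omega> = pathsum T F (\<omega>, ref_hist) (z # ref_hist) - pathsum T F (\<omega>, ref_hist) ref_hist"

lemma integrable_ref_incr: "z \<in> R \<Longrightarrow> integrable M (ref_incr z)"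
  unfolding ref_incr_def[abs_def] using integrable_pathsum[OF set_ref_hist length_ref_hist] set_ref_hist by auto

lemma integral_ref_incr: "z \<in> R \<Longrightarrow> integral\<^sup>L M (ref_incr z) = 0"
  unfolding ref_incr_def[abs_def]
  using integrable_pathsum[OF set_ref_hist length_ref_hist] set_ref_hist
    integral_pathsum_eq_0[of "z # ref_hist"] integral_pathsum_eq_0[of ref_hist] length_ref_hist
  by simp

definition pathsum_avg :: "(int^'d) scheme \<Rightarrow> 'a \<Rightarrow> (int^'d) list \<Rightarrow> real" where
  "pathsum_avg ms \<omega> zs = (\<Sum>p\<leftarrow>ms. fst p * pathsum T F (\<omega>, zs) (snd p @ ref_hist @ ref_hist))"

lemma integrable_pathsum_avg:
  assumes "set zs \<subseteq> R" "length zs = l" "avg_scheme R ms"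
  shows "integrable M (\<lambda>\<omega>. pathsum_avg ms \<omega> zs)"
proof -
  have "\<forall>p\<in>set ms. set (snd p) \<subseteq> R" using assms(3) by (simp add: avg_scheme_def)
  then show ?thesis
  proof (induction ms)
    case (Cons p ms)
    have "integrable M (\<lambda>\<omega>. pathsum T F (\<omega>, zs) (snd p @ ref_hist @ ref_hist))"
      by (rule integrable_pathsum[OF assms(1,2)]) (use Cons.prems set_ref_hist in auto)
    with Cons show ?case by (simp add: pathsum_avg_def)
  qed (simp add: pathsum_avg_def)
qed

text \<open>The paths along \<open>z w c c\<close> and along \<open>w c z c\<close> end at the same point, and the second
  one passes through \<open>(T\<^bsub>\<Sigma>w + \<Sigma>zs\<^esub> \<omega>, c)\<close>; path independence does the rest.\<close>

lemma pathsum_Sshift_diff: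
  assumes \<omega>: "\<omega> \<in> space M" "path_independent \<omega>"
    and zs: "set zs \<subseteq> R" "length zs = l" and z: "z \<in> R" and w: "set w \<subseteq> R"
  shows "pathsum T F (Sshift T z (\<omega>, zs)) (w @ ref_hist @ ref_hist) - pathsum T F (\<omega>, zs) (w @ ref_hist @ ref_hist)
       = ref_incr z (T (sum_list w) (T (sum_list zs) \<omega>)) - F \<omega> zs z"
proof -
  have step: "pathsum T F (\<omega>, zs) (z # w @ ref_hist @ ref_hist) = F \<omega> zs z + pathsum T F (Sshift T z (\<omega>, zs)) (w @ ref_hist @ ref_hist)"
    by (simp add: pathsum_Cons)
  have same_end: "traj T (\<omega>, zs) (z # w @ ref_hist @ ref_hist) (length (z # w @ ref_hist @ ref_hist))
      = traj T (\<omega>, zs) ((w @ ref_hist) @ z # ref_hist) (length ((w @ ref_hist) @ z # ref_hist))"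
    unfolding traj_length fold_Sshift_eq[OF \<omega>(1) zs(2)] using zs(2) length_ref_hist by (simp add: add_ac)
  have swap: "pathsum T F (\<omega>, zs) (z # w @ ref_hist @ ref_hist) = pathsum T F (\<omega>, zs) ((w @ ref_hist) @ z # ref_hist)"
    using \<omega>(2) same_end zs z w set_ref_hist unfolding path_independent_def by (auto simp del: append_assoc)
  have mid: "fold (Sshift T) (w @ ref_hist) (\<omega>, zs) = (T (sum_list w) (T (sum_list zs) \<omega>), ref_hist)"
    unfolding fold_Sshift_eq[OF \<omega>(1) zs(2)]
    using zs(2) length_ref_hist T_add[OF \<omega>(1), of "sum_list w" "sum_list zs"] by (simp add: add_ac)
  have "pathsum T F (\<omega>, zs) ((w @ ref_hist) @ z # ref_hist)
      = pathsum T F (\<omega>, zs) (w @ ref_hist) + pathsum T F (T (sum_list w) (T (sum_list zs) \<omega>), ref_hist) (z # ref_hist)"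
    "pathsum T F (\<omega>, zs) ((w @ ref_hist) @ ref_hist)
      = pathsum T F (\<omega>, zs) (w @ ref_hist) + pathsum T F (T (sum_list w) (T (sum_list zs) \<omega>), ref_hist) ref_hist"
    by (simp_all only: pathsum_append mid)
  with step swap show ?thesis by (simp add: ref_incr_def)
qed

lemma pathsum_avg_Sshift_diff:
  assumes \<omega>: "\<omega> \<in> space M" "path_independent \<omega>"
    and zs: "set zs \<subseteq> R" "length zs = l" and z: "z \<in> R" and ms: "avg_scheme R ms"
  shows "pathsum_avg ms (fst (Sshift T z (\<omega>, zs))) (snd (Sshift T z (\<omega>, zs))) - pathsum_avg ms \<omega> zs
       = shift_avg ms (ref_incr z) (T (sum_list zs) \<omega>) - F \<omega> zs z"
proof -
  have "\<forall>p\<in>set ms. set (snd p) \<subseteq> R" using ms by (simp add: avg_scheme_def)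
  then have "pathsum_avg ms (fst (Sshift T z (\<omega>, zs))) (snd (Sshift T z (\<omega>, zs))) - pathsum_avg ms \<omega> zs
       = shift_avg ms (ref_incr z) (T (sum_list zs) \<omega>) - sum_list (map fst ms) * F \<omega> zs z"
  proof (induction ms)
    case (Cons p ms)
    have step: "pathsum T F (Sshift T z (\<omega>, zs)) (snd p @ ref_hist @ ref_hist) - pathsum T F (\<omega>, zs) (snd p @ ref_hist @ ref_hist)
       = ref_incr z (T (sum_list (snd p)) (T (sum_list zs) \<omega>)) - F \<omega> zs z"
      using Cons.prems by (intro pathsum_Sshift_diff[OF \<omega> zs z]) auto
    have "pathsum_avg (p # ms) (fst (Sshift T z (\<omega>, zs))) (snd (Sshift T z (\<omega>, zs))) - pathsum_avg (p # ms) \<omega> zs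
      = fst p * (pathsum T F (Sshift T z (\<omega>, zs)) (snd p @ ref_hist @ ref_hist) - pathsum T F (\<omega>, zs) (snd p @ ref_hist @ ref_hist))
        + (pathsum_avg ms (fst (Sshift T z (\<omega>, zs))) (snd (Sshift T z (\<omega>, zs))) - pathsum_avg ms \<omega> zs)"
      by (simp add: pathsum_avg_def algebra_simps)
    also have "\<dots> = shift_avg (p # ms) (ref_incr z) (T (sum_list zs) \<omega>) - sum_list (map fst (p # ms)) * F \<omega> zs z"
      using Cons by (simp only: step) (simp add: algebra_simps)
    finally show ?case .
  qed (simp add: pathsum_avg_def)
  with ms show ?thesis by (simp add: avg_scheme_def)
qed

lemma integral_increment_error_le:
  fixes h :: "'a \<Rightarrow> (int^'d) list \<Rightarrow> real"
  assumes ms: "avg_scheme R ms" and zs: "set zs \<subseteq> R" "length zs = l" and z: "z \<in> R"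
    and close_integrable: "\<And>b. set b \<subseteq> R \<Longrightarrow> length b = l \<Longrightarrow> integrable M (\<lambda>\<omega>. h \<omega> b + pathsum_avg ms \<omega> b)"
    and close: "\<And>b. set b \<subseteq> R \<Longrightarrow> length b = l \<Longrightarrow> (\<integral>\<omega>. \<bar>h \<omega> b + pathsum_avg ms \<omega> b\<bar> \<partial>M) \<le> d"
  shows "(\<integral>\<omega>. \<bar>h (fst (Sshift T z (\<omega>, zs))) (snd (Sshift T z (\<omega>, zs))) - h \<omega> zs - F \<omega> zs z\<bar> \<partial>M)
    \<le> (\<integral>\<omega>. \<bar>shift_avg ms (ref_incr z) \<omega>\<bar> \<partial>M) + 2 * d"
proof -
  obtain y b where Sshift_yb: "\<And>\<omega>. Sshift T z (\<omega>, zs) = (T y \<omega>, b)"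
    and "set b \<subseteq> insert z (set zs)" "length b = length zs"
    using Sshift_eq_Pair[of T z zs] by blast
  with zs z have b: "set b \<subseteq> R" "length b = l" by auto
  let ?A = "\<lambda>\<omega>. \<bar>shift_avg ms (ref_incr z) \<omega>\<bar>"
  let ?D = "\<lambda>zs \<omega>. \<bar>h \<omega> zs + pathsum_avg ms \<omega> zs\<bar>"
  have "AE \<omega> in M. \<bar>h (T y \<omega>) b - h \<omega> zs - F \<omega> zs z\<bar> \<le> ?A (T (sum_list zs) \<omega>) + ?D b (T y \<omega>) + ?D zs \<omega>"
    using AE_path_independent AE_space
  proof eventually_elim
    case (elim \<omega>)
    then have "pathsum_avg ms (T y \<omega>) b - pathsum_avg ms \<omega> zs
        = shift_avg ms (ref_incr z) (T (sum_list zs) \<omega>) - F \<omega> zs z"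
      using pathsum_avg_Sshift_diff[OF elim(2,1) zs z ms] by (simp add: Sshift_yb)
    then show ?case by (smt (verit))
  qed
  moreover have A_integrable: "integrable M ?A"
    using integrable_shift_avg[OF integrable_ref_incr[OF z]] by auto
  moreover have D_integrable: "integrable M (?D b)" "integrable M (?D zs)"
    using close_integrable[OF b] close_integrable[OF zs] by auto
  ultimately have "(\<integral>\<omega>. \<bar>h (T y \<omega>) b - h \<omega> zs - F \<omega> zs z\<bar> \<partial>M)
      \<le> (\<integral>\<omega>. ?A (T (sum_list zs) \<omega>) + ?D b (T y \<omega>) + ?D zs \<omega> \<partial>M)"
    using integrable_T[OF A_integrable] integrable_T[OF D_integrable(1)]
    by (intro integral_mono_AE') auto
  also have "\<dots> = (\<integral>\<omega>. ?A \<omega> \<partial>M) + (\<integral>\<omega>. ?D b \<omega> \<partial>M) + (\<integral>\<omega>. ?D zs \<omega> \<partial>M)"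
    using integrable_T[OF A_integrable] integrable_T[OF D_integrable(1)] D_integrable(2)
      integral_T[OF borel_measurable_integrable[OF A_integrable]]
      integral_T[OF borel_measurable_integrable[OF D_integrable(1)]]
    by simp
  also have "\<dots> \<le> (\<integral>\<omega>. ?A \<omega> \<partial>M) + 2 * d"
    using close[OF b] close[OF zs] by simp
  finally show ?thesis by (simp add: Sshift_yb)
qed

lemma bounded_potential_approx:
  assumes e: "0 < e"
  shows "\<exists>h. (\<forall>zs. set zs \<subseteq> R \<longrightarrow> length zs = l \<longrightarrow> (\<lambda>\<omega>. h \<omega> zs) \<in> borel_measurable M)
    \<and> (\<exists>B. \<forall>\<omega>\<in>space M. \<forall>zs. set zs \<subseteq> R \<longrightarrow> length zs = l \<longrightarrow> \<bar>h \<omega> zs\<bar> \<le> B)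
    \<and> (\<forall>zs z. set zs \<subseteq> R \<longrightarrow> length zs = l \<longrightarrow> z \<in> R \<longrightarrow>
      (\<integral>\<omega>. \<bar>h (fst (Sshift T z (\<omega>, zs))) (snd (Sshift T z (\<omega>, zs))) - h \<omega> zs - F \<omega> zs z\<bar> \<partial>M) < e)"
proof -
  obtain ms where ms: "avg_scheme R ms" "\<And>z. z \<in> R \<Longrightarrow> (\<integral>\<omega>. \<bar>shift_avg ms (ref_incr z) \<omega>\<bar> \<partial>M) < e / 2"
    using shift_avg_L1_small_finite[where Z=R and G=ref_incr and e="e / 2",
        OF generates finite_R integrable_ref_incr integral_ref_incr] e
    by auto
  define BL where "BL = {zs. set zs \<subseteq> R \<and> length zs = l}"
  have S_integrable: "integrable M (\<lambda>\<omega>. pathsum_avg ms \<omega> zs)" if "zs \<in> BL" for zs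
    using integrable_pathsum_avg[OF _ _ ms(1)] that by (simp add: BL_def)
  obtain K :: nat where K: "\<And>zs. zs \<in> BL \<Longrightarrow>
      (\<integral>\<omega>. \<bar>max (- real K) (min (real K) (- pathsum_avg ms \<omega> zs)) + pathsum_avg ms \<omega> zs\<bar> \<partial>M) < e / 4"
  proof (rule finite_uniform_truncation[where f="\<lambda>zs \<omega>. - pathsum_avg ms \<omega> zs" and e="e / 4"])
    show "finite BL" unfolding BL_def by (rule finite_lists_length_eq[OF finite_R])
  qed (use e S_integrable in auto)
  define h where "h \<omega> zs = max (- real K) (min (real K) (- pathsum_avg ms \<omega> zs))" for \<omega> zs
  have h_meas: "(\<lambda>\<omega>. h \<omega> zs) \<in> borel_measurable M" if "zs \<in> BL" for zs
    using S_integrable[OF that] unfolding h_def by measurable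
  have close_integrable: "integrable M (\<lambda>\<omega>. h \<omega> zs + pathsum_avg ms \<omega> zs)" if "zs \<in> BL" for zs
  proof -
    have "integrable M (\<lambda>\<omega>. h \<omega> zs)"
      using h_meas[OF that] by (intro integrable_const_bound[where B="real K"]) (auto simp: h_def)
    with S_integrable[OF that] show ?thesis by auto
  qed
  have "(\<integral>\<omega>. \<bar>h (fst (Sshift T z (\<omega>, zs))) (snd (Sshift T z (\<omega>, zs))) - h \<omega> zs - F \<omega> zs z\<bar> \<partial>M) < e"
    if "set zs \<subseteq> R" "length zs = l" "z \<in> R" for zs z
  proof -
    have "(\<integral>\<omega>. \<bar>h (fst (Sshift T z (\<omega>, zs))) (snd (Sshift T z (\<omega>, zs))) - h \<omega> zs - F \<omega> zs z\<bar> \<partial>M)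
        \<le> (\<integral>\<omega>. \<bar>shift_avg ms (ref_incr z) \<omega>\<bar> \<partial>M) + 2 * (e / 4)"
      using K close_integrable
      by (intro integral_increment_error_le[OF ms(1) that]) (auto simp: BL_def h_def less_imp_le)
    with ms(2)[OF that(3)] show ?thesis by simp
  qed
  moreover have "\<bar>h \<omega> zs\<bar> \<le> real K" for \<omega> zs by (simp add: h_def)
  ultimately show ?thesis using h_meas unfolding BL_def by blast
qed

end

theorem lemmaC3:
  fixes M :: "'a measure" and T :: "int^'d \<Rightarrow> 'a \<Rightarrow> 'a"
    and R :: "(int^'d) set" and l :: nat
    and F :: "'a \<Rightarrow> (int^'d) list \<Rightarrow> int^'d \<Rightarrow> real"
  assumes "ergodic_action M T"
    and "finite R" and "zgen R = UNIV"
    and "classK M T R l F"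
  shows "\<exists>h :: nat \<Rightarrow> 'a \<Rightarrow> (int^'d) list \<Rightarrow> real.
     (\<forall>k. (\<forall>zs. set zs \<subseteq> R \<longrightarrow> length zs = l \<longrightarrow> (\<lambda>\<omega>. h k \<omega> zs) \<in> borel_measurable M)
        \<and> (\<exists>B. \<forall>\<omega>\<in>space M. \<forall>zs. set zs \<subseteq> R \<longrightarrow> length zs = l \<longrightarrow> \<bar>h k \<omega> zs\<bar> \<le> B))
   \<and> (\<forall>zs z. set zs \<subseteq> R \<longrightarrow> length zs = l \<longrightarrow> z \<in> R \<longrightarrow>
        (\<lambda>k. \<integral>\<omega>. \<bar>h k (fst (Sshift T z (\<omega>, zs))) (snd (Sshift T z (\<omega>, zs)))
                    - h k \<omega> zs - F \<omega> zs z\<bar> \<partial>M) \<longlonglongrightarrow> 0)"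
proof -
  interpret classK_cocycle M T R l F
    using assms by unfold_locales (simp_all add: ergodic_Zd_action_def)
  let ?err = "\<lambda>h zs z. \<integral>\<omega>. \<bar>h (fst (Sshift T z (\<omega>, zs))) (snd (Sshift T z (\<omega>, zs))) - h \<omega> zs - F \<omega> zs z\<bar> \<partial>M"
  let ?regular = "\<lambda>h. (\<forall>zs. set zs \<subseteq> R \<longrightarrow> length zs = l \<longrightarrow> (\<lambda>\<omega>. h \<omega> zs) \<in> borel_measurable M)
    \<and> (\<exists>B. \<forall>\<omega>\<in>space M. \<forall>zs. set zs \<subseteq> R \<longrightarrow> length zs = l \<longrightarrow> \<bar>h \<omega> zs\<bar> \<le> B)"
  have "\<forall>k. \<exists>h. ?regular h
      \<and> (\<forall>zs z. set zs \<subseteq> R \<longrightarrow> length zs = l \<longrightarrow> z \<in> R \<longrightarrow> ?err h zs z < inverse (Suc k))"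
    unfolding conj_assoc by (intro allI bounded_potential_approx) simp
  then obtain hs where hs: "\<forall>k. ?regular (hs k)
      \<and> (\<forall>zs z. set zs \<subseteq> R \<longrightarrow> length zs = l \<longrightarrow> z \<in> R \<longrightarrow> ?err (hs k) zs z < inverse (Suc k))"
    by (auto dest: choice)
  have "(\<lambda>k. ?err (hs k) zs z) \<longlonglongrightarrow> 0" if "set zs \<subseteq> R" "length zs = l" "z \<in> R" for zs z
  proof (rule tendsto_sandwich[OF _ _ tendsto_const LIMSEQ_inverse_real_of_nat])
    show "\<forall>\<^sub>F k in sequentially. ?err (hs k) zs z \<le> inverse (Suc k)"
      using hs that by (simp add: less_imp_le)
  qed (simp add: integral_nonneg_AE)
  with hs show ?thesis by blast
qed

end
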